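(* Let $n\ge 2$ and let $\epsilon_n$ be a primitive $n$-th root of unity in $\mathbb{C}$. On the vector space $\mathscr{C}_n=\mathbb{C}[z]/(z^n-1)$ define the multiplication $$p(z)\circ q(z)=p(\epsilon_n z)\,q(\epsilon_n z)\mod (z^n-1).$$ Then $(\mathscr{C}_n,\circ)$ is an $n$-dimensional commutative medial isospectral algebra over $\mathbb{C}$. Furthermore, every $p\in\mathscr{C}_n$ satisfies $p^{n+1}=\beta(p)\,p$ (principal powers with respect to $\circ$), where $$\beta(p)=p(1)\,p(\epsilon_n)\,p(\epsilon_n^2)\cdots p(\epsilon_n^{n-1}),$$ and $\beta:\mathscr{C}_n\to\mathbb{C}$ is a multiplicative homomorphism.
   Context: An algebra is medial if $(xy)(zw)=(xz)(yw)$ for all $x,y,z,w$. For an idempotent $c$, the spectrum of $c$ is the multiset of eigenvalues of $L_c:x\mapsto cx$; an algebra is isospectral if all its nonzero idempotents have the same spectrum. Principal powers: $x^1=x$, $x^{k+1}=x\circ x^k$. $p(\alpha)$ for $p\in\mathscr{C}_n$ and $\alpha^n=1$ is well defined. *)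

theory Defs
  imports "HOL-Computational_Algebra.Polynomial" "Jordan_Normal_Form.Char_Poly"
begin

definition primitive_root :: "nat \<Rightarrow> complex \<Rightarrow> bool" where
  "primitive_root n e \<longleftrightarrow> e ^ n = 1 \<and> (\<forall>k. 0 < k \<and> k < n \<longrightarrow> e ^ k \<noteq> 1)"

text \<open>The carrier of C_n = C[z]/(z^n - 1): canonical representatives, i.e.
  polynomials of degree < n (the zero polynomial included).\<close>
definition Cn :: "nat \<Rightarrow> complex poly set" where
  "Cn n = {p. degree p < n}"

definition circ :: "nat \<Rightarrow> complex \<Rightarrow> complex poly \<Rightarrow> complex poly \<Rightarrow> complex poly" where
  "circ n e p q = (pcompose p [:0, e:] * pcompose q [:0, e:]) mod (monom 1 n - 1)"

fun principal_power :: "('a \<Rightarrow> 'a \<Rightarrow> 'a) \<Rightarrow> nat \<Rightarrow> 'a \<Rightarrow> 'a" where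
  "principal_power f 0 x = undefined"
| "principal_power f (Suc 0) x = x"
| "principal_power f (Suc (Suc k)) x = f x (principal_power f (Suc k) x)"

definition Lmat :: "nat \<Rightarrow> complex \<Rightarrow> complex poly \<Rightarrow> complex mat" where
  "Lmat n e c = mat n n (\<lambda>(i, j). coeff (circ n e c (monom 1 j)) i)"

definition spectrum_Cn :: "nat \<Rightarrow> complex \<Rightarrow> complex poly \<Rightarrow> complex multiset" where
  "spectrum_Cn n e c = proots (char_poly (Lmat n e c))"

definition beta :: "nat \<Rightarrow> complex \<Rightarrow> complex poly \<Rightarrow> complex" where
  "beta n e p = (\<Prod>k<n. poly p (e ^ k))"

end

theory Submission
  imports Defs
begin

text \<open>
  Evaluation at the roots of unity \<open>1, \<epsilon>, \<dots>, \<epsilon>\<^sup>n\<^sup>-\<^sup>1\<close> identifies \<open>C\<^sub>n\<close> with \<open>\<complex>\<^sup>n\<close>,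
  and in these coordinates \<open>(p \<circ> q)(\<epsilon>\<^sup>k) = p(\<epsilon>\<^sup>k\<^sup>+\<^sup>1) q(\<epsilon>\<^sup>k\<^sup>+\<^sup>1)\<close>: the product is a cyclic
  shift followed by the pointwise product. Commutativity, mediality, \<open>p\<^sup>n\<^sup>+\<^sup>1 = \<beta>(p) p\<close> and
  multiplicativity of \<open>\<beta>\<close> are then identities between products of values. For a nonzero
  idempotent \<open>c\<close> the equation \<open>c(\<epsilon>\<^sup>k) = c(\<epsilon>\<^sup>k\<^sup>+\<^sup>1)\<^sup>2\<close> forces all values of \<open>c\<close> to be nonzero,
  hence \<open>\<beta>(c) = 1\<close>, and then for every \<open>m\<close> the values \<open>y\<^sub>k = \<epsilon>\<^sup>m\<^sup>k / (c(\<epsilon>) \<cdots> c(\<epsilon>\<^sup>k))\<close>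
  define an eigenvector of \<open>L\<^sub>c\<close> for the eigenvalue \<open>\<epsilon>\<^sup>m\<close>. So \<open>L\<^sub>c\<close> has the \<open>n\<close> distinct
  eigenvalues \<open>\<epsilon>\<^sup>m\<close>, which determines its characteristic polynomial independently of \<open>c\<close>.
\<close>

lemma prod_lessThan_shift_periodic:
  fixes f :: "nat \<Rightarrow> 'a::comm_monoid_mult"
  assumes periodic: "\<And>j. f (j + n) = f j"
  shows "(\<Prod>j<n. f (j + s)) = (\<Prod>j<n. f j)"
proof (induction s)
  case (Suc s)
  have "(\<Prod>j<n. f (j + Suc s)) = (\<Prod>j<n. f (j + s))"
  proof (cases n)
    case (Suc m)
    have "(\<Prod>j<n. f (j + Suc s)) = (\<Prod>j<m. f (Suc j + s)) * f (n + s)"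
      by (simp add: Suc)
    also have "\<dots> = f s * (\<Prod>j<m. f (Suc j + s))"
      using periodic[of s] by (simp add: add.commute mult.commute)
    also have "\<dots> = (\<Prod>j<n. f (j + s))"
      by (simp only: Suc prod.lessThan_Suc_shift) simp
    finally show ?thesis .
  qed simp
  with Suc.IH show ?case by simp
qed simp

lemma proots_eq_mset_set:
  fixes P :: "'a::idom poly"
  assumes "P \<noteq> 0" "finite S" "degree P \<le> card S" "\<And>x. x \<in> S \<Longrightarrow> poly P x = 0"
  shows "proots P = mset_set S"
proof -
  have sub: "mset_set S \<subseteq># proots P"
    unfolding subseteq_mset_def
  proof
    fix x
    show "count (mset_set S) x \<le> count (proots P) x"
      using assms order_root[of P x] by (cases "x \<in> S") auto
  qed
  have "size (proots P) \<le> size (mset_set S)"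
    using size_proots_le[of P] assms(3) by simp
  then show ?thesis
    using sub mset_subset_size subset_mset.le_neq_trans by fastforce
qed

lemma proots_char_poly_distinct_eigenvalues:
  fixes A :: "'a::field mat"
  assumes "A \<in> carrier_mat n n" "finite S" "card S = n" "\<And>x. x \<in> S \<Longrightarrow> eigenvalue A x"
  shows "proots (char_poly A) = mset_set S"
proof (rule proots_eq_mset_set)
  have "monic (char_poly A)" "degree (char_poly A) = n"
    using degree_monic_char_poly[OF assms(1)] by auto
  then show "char_poly A \<noteq> 0" "degree (char_poly A) \<le> card S"
    using assms(3) by auto
  show "poly (char_poly A) x = 0" if "x \<in> S" for x
    using eigenvalue_root_char_poly[OF assms(1)] assms(4)[OF that] by simp
qed (use assms in simp)

lemma poly_as_sum_of_monoms_lessThan: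
  assumes "degree p < n"
  shows "(\<Sum>i<n. monom (coeff p i) i) = p"
proof (rule poly_eqI)
  fix j
  show "coeff (\<Sum>i<n. monom (coeff p i) i) j = coeff p j"
    using assms by (auto simp: coeff_sum coeff_monom coeff_eq_0)
qed

interpretation poly_vs: vector_space "Polynomial.smult :: 'a::field \<Rightarrow> 'a poly \<Rightarrow> 'a poly"
  by unfold_locales (simp_all add: smult_add_right smult_add_left)

lemma subspace_degree_less:
  "0 < n \<Longrightarrow> poly_vs.subspace {p :: 'a::field poly. degree p < n}"
  unfolding poly_vs.subspace_def
  by (auto intro: le_less_trans[OF degree_add_le_max] le_less_trans[OF degree_smult_le])

lemma dim_degree_less:
  assumes "0 < n"
  shows "poly_vs.dim {p :: 'a::field poly. degree p < n} = n"
proof -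
  define B where "B = (\<lambda>j. monom (1::'a) j) ` {..<n}"
  have inj: "inj_on (\<lambda>j. monom (1::'a) j) {..<n}"
    by (rule inj_onI) (metis monom_eq_iff' one_neq_zero)
  have "B \<subseteq> {p. degree p < n}"
    by (auto simp: B_def intro: le_less_trans[OF degree_monom_le])
  moreover have "{p. degree p < n} \<subseteq> poly_vs.span B"
  proof
    fix p :: "'a poly" assume "p \<in> {p. degree p < n}"
    then have "p = (\<Sum>j<n. monom (coeff p j) j)"
      by (simp add: poly_as_sum_of_monoms_lessThan)
    also have "\<dots> = (\<Sum>j<n. Polynomial.smult (coeff p j) (monom 1 j))"
      by (simp add: smult_monom)
    also have "\<dots> \<in> poly_vs.span B"
      using assms by (intro poly_vs.span_sum poly_vs.span_scale poly_vs.span_base) (auto simp: B_def)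
    finally show "p \<in> poly_vs.span B" .
  qed
  ultimately have "poly_vs.span B = {p. degree p < n}"
    using subspace_degree_less[OF assms] by (rule poly_vs.span_subspace)
  also have "\<dots> = poly_vs.span {p. degree p < n}"
    by (rule sym) (simp add: poly_vs.span_eq_iff subspace_degree_less[OF assms])
  finally have span: "poly_vs.span B = poly_vs.span {p. degree p < n}" .
  have "poly_vs.independent B"
  proof (rule poly_vs.independent_if_scalars_zero)
    fix f x assume sum0: "(\<Sum>x\<in>B. Polynomial.smult (f x) x) = 0" and "x \<in> B"
    then obtain i where i: "i < n" "x = monom 1 i" unfolding B_def by auto
    have "0 = coeff (\<Sum>x\<in>B. Polynomial.smult (f x) x) i" using sum0 by simp
    also have "\<dots> = (\<Sum>j<n. f (monom 1 j) * coeff (monom 1 j) i)"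
      unfolding B_def by (simp add: coeff_sum sum.reindex[OF inj])
    also have "\<dots> = (\<Sum>j<n. if j = i then f (monom 1 j) else 0)"
      by (rule sum.cong) (auto simp: coeff_monom)
    also have "\<dots> = f x" using i by simp
    finally show "f x = 0" by simp
  qed (simp add: B_def)
  with span have "poly_vs.dim {p :: 'a poly. degree p < n} = card B"
    by (rule poly_vs.dim_eq_card)
  then show ?thesis
    by (simp add: B_def card_image[OF inj])
qed

lemma Cn_add: "p \<in> Cn n \<Longrightarrow> q \<in> Cn n \<Longrightarrow> p + q \<in> Cn n"
  unfolding Cn_def by (auto intro: le_less_trans[OF degree_add_le_max])

lemma Cn_smult: "p \<in> Cn n \<Longrightarrow> Polynomial.smult a p \<in> Cn n"
  unfolding Cn_def by (auto intro: le_less_trans[OF degree_smult_le])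

lemma Cn_sum: "0 < n \<Longrightarrow> (\<And>x. x \<in> A \<Longrightarrow> f x \<in> Cn n) \<Longrightarrow> sum f A \<in> Cn n"
  unfolding Cn_def by (auto intro: degree_sum_less)

lemma Cn_monom: "j < n \<Longrightarrow> monom c j \<in> Cn n"
  unfolding Cn_def by (auto intro: le_less_trans[OF degree_monom_le])

lemma degree_monom_minus_one:
  assumes "0 < n"
  shows "degree (monom 1 n - 1 :: 'a::comm_ring_1 poly) = n"
proof (rule antisym)
  show "degree (monom 1 n - 1 :: 'a poly) \<le> n"
    by (rule order.trans[OF degree_diff_le_max]) (auto simp: degree_monom_le)
  show "n \<le> degree (monom 1 n - 1 :: 'a poly)"
    by (rule le_degree) (use assms in \<open>simp add: coeff_monom\<close>)
qed

lemma mod_monom_minus_one_in_Cn: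
  assumes "0 < n"
  shows "P mod (monom 1 n - 1) \<in> Cn n"
proof -
  have "degree (monom 1 n - 1 :: complex poly) = n"
    using assms by (rule degree_monom_minus_one)
  moreover from this assms have "monom 1 n - 1 \<noteq> (0 :: complex poly)" by auto
  ultimately show ?thesis
    using degree_mod_less[of "monom 1 n - 1" P] assms by (auto simp: Cn_def)
qed

locale circ_algebra =
  fixes n :: nat and e :: complex
  assumes n_pos: "0 < n" and primitive: "primitive_root n e"
begin

lemma root_power_n: "e ^ n = 1"
  using primitive by (simp add: primitive_root_def)

lemma root_nonzero: "e \<noteq> 0"
  using root_power_n n_pos by (metis zero_neq_one zero_power)

lemma root_power_add_n: "e ^ (k + n) = e ^ k"
  by (simp add: power_add root_power_n)

lemma root_power_mult_n: "e ^ (k + n * t) = e ^ k"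
  by (simp add: power_add power_mult root_power_n)

lemma inj_on_root_powers: "inj_on (\<lambda>k. e ^ k) {..<n}"
proof -
  have distinct: "e ^ i \<noteq> e ^ j" if "i < j" "j < n" for i j
  proof
    assume "e ^ i = e ^ j"
    moreover have "e ^ j = e ^ i * e ^ (j - i)"
      using that by (simp flip: power_add)
    ultimately have "e ^ (j - i) = 1" using root_nonzero by simp
    then show False using primitive that unfolding primitive_root_def by auto
  qed
  show ?thesis
  proof (rule inj_onI)
    fix i j assume "i \<in> {..<n}" "j \<in> {..<n}" "e ^ i = e ^ j"
    then show "i = j"
      using distinct[of i j] distinct[of j i] by (cases i j rule: linorder_cases) auto
  qed
qed

lemma card_root_powers: "card ((\<lambda>k. e ^ k) ` {..<n}) = n"
  by (simp add: card_image[OF inj_on_root_powers])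

lemma poly_mod_at_root_power: "poly (P mod (monom 1 n - 1)) (e ^ k) = poly P (e ^ k)"
proof -
  have "(e ^ k) ^ n = (e ^ n) ^ k"
    by (simp add: power_mult[symmetric] mult.commute)
  then have root: "poly (monom 1 n - 1) (e ^ k) = 0"
    by (simp add: poly_monom root_power_n)
  have "poly P (e ^ k) = poly (P div (monom 1 n - 1) * (monom 1 n - 1) + P mod (monom 1 n - 1)) (e ^ k)"
    by (simp only: div_mult_mod_eq)
  also have "\<dots> = poly (P mod (monom 1 n - 1)) (e ^ k)"
    by (simp only: poly_add poly_mult root mult_zero_right add_0)
  finally show ?thesis by simp
qed

lemma circ_in_Cn: "circ n e p q \<in> Cn n"
  unfolding circ_def using n_pos by (rule mod_monom_minus_one_in_Cn)

lemma poly_circ_at_root_power: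
  "poly (circ n e p q) (e ^ k) = poly p (e ^ Suc k) * poly q (e ^ Suc k)"
  unfolding circ_def poly_mod_at_root_power by (simp add: poly_pcompose mult.commute)

lemma Cn_eqI:
  assumes "p \<in> Cn n" "q \<in> Cn n" "\<And>k. k < n \<Longrightarrow> poly p (e ^ k) = poly q (e ^ k)"
  shows "p = q"
  by (rule poly_eqI_degree[where A = "(\<lambda>k. e ^ k) ` {..<n}"])
     (use assms in \<open>auto simp: card_root_powers Cn_def\<close>)

lemma circ_linear_left:
  assumes "p \<in> Cn n" "q \<in> Cn n"
  shows "circ n e (Polynomial.smult a p + q) r = Polynomial.smult a (circ n e p r) + circ n e q r"
  by (rule Cn_eqI) (auto simp: circ_in_Cn Cn_add Cn_smult poly_circ_at_root_power algebra_simps)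

lemma circ_commute: "circ n e p q = circ n e q p"
  unfolding circ_def by (simp add: mult.commute)

lemma circ_medial: "circ n e (circ n e x y) (circ n e z w) = circ n e (circ n e x z) (circ n e y w)"
  by (rule Cn_eqI) (simp_all add: circ_in_Cn poly_circ_at_root_power ac_simps del: power_Suc)

lemma prod_shift_eq_beta: "(\<Prod>j<n. poly p (e ^ (j + s))) = beta n e p"
  unfolding beta_def by (rule prod_lessThan_shift_periodic) (simp add: root_power_add_n)

lemma beta_circ: "beta n e (circ n e p q) = beta n e p * beta n e q"
proof -
  have "beta n e (circ n e p q) = (\<Prod>k<n. poly p (e ^ (k + 1)) * poly q (e ^ (k + 1)))"
    unfolding beta_def by (simp add: poly_circ_at_root_power)
  also have "\<dots> = beta n e p * beta n e q"
    by (simp only: prod.distrib prod_shift_eq_beta)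
  finally show ?thesis .
qed

lemma principal_power_in_Cn: "p \<in> Cn n \<Longrightarrow> principal_power (circ n e) (Suc m) p \<in> Cn n"
  by (cases m) (auto simp: circ_in_Cn)

lemma poly_principal_power_at_root_power:
  "poly (principal_power (circ n e) (Suc m) p) (e ^ k)
     = (\<Prod>j<m. poly p (e ^ (j + (k + 1)))) * poly p (e ^ (k + m))"
proof (induction m arbitrary: k)
  case (Suc m)
  have "poly (principal_power (circ n e) (Suc (Suc m)) p) (e ^ k)
      = poly p (e ^ Suc k) * poly (principal_power (circ n e) (Suc m) p) (e ^ Suc k)"
    by (simp only: principal_power.simps poly_circ_at_root_power)
  also have "\<dots> = (\<Prod>j<Suc m. poly p (e ^ (j + (k + 1)))) * poly p (e ^ (k + Suc m))"
    by (simp only: Suc.IH prod.lessThan_Suc_shift) (simp add: ac_simps)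
  finally show ?case .
qed simp

lemma principal_power_n_plus_one:
  assumes "p \<in> Cn n"
  shows "principal_power (circ n e) (n + 1) p = Polynomial.smult (beta n e p) p"
proof (rule Cn_eqI)
  fix k
  have "poly (principal_power (circ n e) (n + 1) p) (e ^ k)
      = (\<Prod>j<n. poly p (e ^ (j + (k + 1)))) * poly p (e ^ (k + n))"
    using poly_principal_power_at_root_power[of n p k] unfolding Suc_eq_plus1 .
  also have "\<dots> = beta n e p * poly p (e ^ k)"
    by (simp only: prod_shift_eq_beta root_power_add_n)
  finally show "poly (principal_power (circ n e) (n + 1) p) (e ^ k)
      = poly (Polynomial.smult (beta n e p) p) (e ^ k)"
    by simp
qed (use assms principal_power_in_Cn[of p n] in \<open>auto simp: Cn_smult\<close>)

text \<open>The inverse discrete Fourier transform of the \<open>i\<close>-th unit vector; its values at the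
  \<open>\<epsilon>\<^sup>k\<close> come from the orthogonality of the characters of \<open>\<int>/n\<close>.\<close>
definition lagrange_basis :: "nat \<Rightarrow> complex poly" where
  "lagrange_basis i = (\<Sum>j<n. monom ((inverse e ^ i) ^ j / of_nat n) j)"

lemma poly_lagrange_basis:
  assumes "i < n" "k < n"
  shows "poly (lagrange_basis i) (e ^ k) = (if i = k then 1 else 0)"
proof -
  define w where "w = inverse e ^ i * e ^ k"
  have "poly (lagrange_basis i) (e ^ k) = (\<Sum>j<n. w ^ j) / of_nat n"
    by (simp add: lagrange_basis_def poly_sum poly_monom w_def power_mult_distrib sum_divide_distrib)
  also have "\<dots> = (if i = k then 1 else 0)"
  proof (cases "i = k")
    case True
    then show ?thesis using root_nonzero n_pos by (simp add: w_def power_inverse)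
  next
    case False
    have "w \<noteq> 1"
    proof
      assume "w = 1"
      then have "e ^ k = e ^ i" using root_nonzero by (simp add: w_def power_inverse field_simps)
      then show False using inj_on_root_powers assms False by (auto dest: inj_onD)
    qed
    moreover have "w ^ n = inverse ((e ^ n) ^ i) * (e ^ n) ^ k"
      by (simp add: w_def power_mult_distrib power_inverse power_mult[symmetric] mult.commute)
    then have "w ^ n = 1"
      by (simp add: root_power_n)
    ultimately show ?thesis using False geometric_sum[of w n] by simp
  qed
  finally show ?thesis .
qed

lemma Cn_interpolation: "\<exists>p\<in>Cn n. \<forall>k<n. poly p (e ^ k) = y k"
proof (intro bexI allI impI)
  show "(\<Sum>i<n. Polynomial.smult (y i) (lagrange_basis i)) \<in> Cn n"
    unfolding lagrange_basis_def by (intro Cn_sum n_pos Cn_smult Cn_monom) auto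
  fix k assume "k < n"
  then show "poly (\<Sum>i<n. Polynomial.smult (y i) (lagrange_basis i)) (e ^ k) = y k"
    by (simp add: poly_sum poly_lagrange_basis if_distrib cong: if_cong)
qed

context
  fixes c :: "complex poly"
  assumes c_in_Cn: "c \<in> Cn n" and c_nonzero: "c \<noteq> 0" and c_idem: "circ n e c c = c"
begin

lemma poly_idempotent_at_root_power_nonzero: "poly c (e ^ k) \<noteq> 0"
proof
  assume zero: "poly c (e ^ k) = 0"
  have vanish: "poly c (e ^ (k + j)) = 0" for j
  proof (induction j)
    case (Suc j)
    then show ?case
      using poly_circ_at_root_power[of c c "k + j"] c_idem by simp
  qed (use zero in simp)
  have c_vanishes: "poly c (e ^ m) = 0" for m
  proof -
    have "k \<le> m + n * k" using n_pos by (cases n) auto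
    then obtain j where "m + n * k = k + j" using le_Suc_ex by blast
    then have "poly c (e ^ (m + n * k)) = 0" using vanish by simp
    then show ?thesis by (simp only: root_power_mult_n)
  qed
  have "c = 0"
    by (rule Cn_eqI[OF c_in_Cn]) (auto simp: Cn_def n_pos c_vanishes)
  with c_nonzero show False by contradiction
qed

lemma beta_idempotent: "beta n e c = 1"
proof -
  have "beta n e c \<noteq> 0"
    unfolding beta_def using poly_idempotent_at_root_power_nonzero by simp
  moreover have "beta n e c = beta n e c * beta n e c"
    using beta_circ[of c c] c_idem by simp
  ultimately show ?thesis by simp
qed

lemma idempotent_eigenvector: "\<exists>p\<in>Cn n. p \<noteq> 0 \<and> circ n e c p = Polynomial.smult (e ^ m) p"
proof -
  define a where "a k = poly c (e ^ k)" for k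
  define y where "y k = e ^ (m * k) / (\<Prod>j<k. a (Suc j))" for k
  have a_nonzero: "a k \<noteq> 0" for k
    unfolding a_def by (rule poly_idempotent_at_root_power_nonzero)
  have y_step: "a (Suc k) * y (Suc k) = e ^ m * y k" for k
    using a_nonzero by (simp add: y_def field_simps power_add)
  have "e ^ (m * n) = (e ^ n) ^ m"
    by (simp only: mult.commute[of m n] power_mult)
  moreover have "(\<Prod>j<n. a (Suc j)) = beta n e c"
    using prod_shift_eq_beta[of c 1] by (simp add: a_def)
  ultimately have "y n = y 0"
    by (simp add: y_def root_power_n beta_idempotent)
  obtain p where p: "p \<in> Cn n" and py: "\<And>k. k < n \<Longrightarrow> poly p (e ^ k) = y k"
    using Cn_interpolation[of y] by blast
  have py_Suc: "poly p (e ^ Suc k) = y (Suc k)" if "k < n" for k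
  proof (cases "Suc k < n")
    case False
    then have "Suc k = n" using that by simp
    then show ?thesis using py[OF n_pos] \<open>y n = y 0\<close> by (simp add: root_power_n)
  qed (rule py)
  have "circ n e c p = Polynomial.smult (e ^ m) p"
  proof (rule Cn_eqI)
    fix k assume k: "k < n"
    have "poly (circ n e c p) (e ^ k) = a (Suc k) * y (Suc k)"
      using py_Suc[OF k] by (simp add: poly_circ_at_root_power a_def)
    also have "\<dots> = e ^ m * y k"
      by (rule y_step)
    finally show "poly (circ n e c p) (e ^ k) = poly (Polynomial.smult (e ^ m) p) (e ^ k)"
      using py[OF k] by simp
  qed (simp_all add: circ_in_Cn Cn_smult p)
  moreover have "p \<noteq> 0"
    using py[OF n_pos] by (auto simp: y_def)
  ultimately show ?thesis using p by blast
qed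

lemma Lmat_mult_coeffs:
  assumes "p \<in> Cn n"
  shows "Lmat n e c *\<^sub>v vec n (coeff p) = vec n (coeff (circ n e c p))"
proof -
  have expand: "circ n e c p = (\<Sum>j<n. Polynomial.smult (coeff p j) (circ n e c (monom 1 j)))"
  proof (rule Cn_eqI)
    have "poly p x = poly (\<Sum>j<n. monom (coeff p j) j) x" for x
      using assms by (simp add: Cn_def poly_as_sum_of_monoms_lessThan)
    then have "poly p x = (\<Sum>j<n. coeff p j * x ^ j)" for x
      by (simp add: poly_sum poly_monom)
    then show "poly (circ n e c p) (e ^ k)
        = poly (\<Sum>j<n. Polynomial.smult (coeff p j) (circ n e c (monom 1 j))) (e ^ k)" for k
      by (simp add: poly_sum poly_circ_at_root_power poly_monom sum_distrib_left ac_simps)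
  qed (auto intro: Cn_sum n_pos Cn_smult circ_in_Cn)
  show ?thesis
  proof (rule eq_vecI)
    fix i assume "i < dim_vec (vec n (coeff (circ n e c p)))"
    then have i: "i < n" by simp
    then have "(Lmat n e c *\<^sub>v vec n (coeff p)) $ i
        = (\<Sum>j<n. coeff (circ n e c (monom 1 j)) i * coeff p j)"
      by (simp add: Lmat_def scalar_prod_def lessThan_atLeast0)
    also have "\<dots> = coeff (circ n e c p) i"
      by (subst expand) (simp add: coeff_sum mult.commute)
    finally show "(Lmat n e c *\<^sub>v vec n (coeff p)) $ i = vec n (coeff (circ n e c p)) $ i"
      using i by simp
  qed (simp add: Lmat_def)
qed

lemma eigenvalue_idempotent: "eigenvalue (Lmat n e c) (e ^ m)"
proof -
  obtain p where p: "p \<in> Cn n" "p \<noteq> 0" "circ n e c p = Polynomial.smult (e ^ m) p"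
    using idempotent_eigenvector by blast
  have "vec n (coeff p) \<noteq> 0\<^sub>v n"
  proof
    assume zero: "vec n (coeff p) = 0\<^sub>v n"
    have "coeff p j = 0" for j
    proof (cases "j < n")
      case True
      then show ?thesis using arg_cong[OF zero, of "\<lambda>v. v $ j"] by simp
    next
      case False
      then show ?thesis using p(1) by (simp add: Cn_def coeff_eq_0)
    qed
    with p(2) show False by (simp add: poly_eq_iff)
  qed
  moreover have "Lmat n e c *\<^sub>v vec n (coeff p) = e ^ m \<cdot>\<^sub>v vec n (coeff p)"
    by (simp only: Lmat_mult_coeffs[OF p(1)] p(3)) (auto intro!: eq_vecI)
  moreover have "dim_row (Lmat n e c) = n"
    by (simp add: Lmat_def)
  ultimately have "eigenvector (Lmat n e c) (vec n (coeff p)) (e ^ m)"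
    unfolding eigenvector_def by simp
  then show ?thesis
    unfolding eigenvalue_def by blast
qed

lemma spectrum_idempotent: "spectrum_Cn n e c = mset_set ((\<lambda>k. e ^ k) ` {..<n})"
  unfolding spectrum_Cn_def
proof (rule proots_char_poly_distinct_eigenvalues)
  show "Lmat n e c \<in> carrier_mat n n"
    by (simp add: Lmat_def)
qed (auto simp: card_root_powers eigenvalue_idempotent)

end

end

theorem theorem2p5:
  fixes n :: nat and e :: complex
  assumes "n \<ge> 2" and "primitive_root n e"
  shows "vector_space (Polynomial.smult :: complex \<Rightarrow> complex poly \<Rightarrow> complex poly)
    \<and> Modules.module.subspace (Polynomial.smult :: complex \<Rightarrow> complex poly \<Rightarrow> complex poly) (Cn n)
    \<and> vector_space.dim (Polynomial.smult :: complex \<Rightarrow> complex poly \<Rightarrow> complex poly) (Cn n) = n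
    \<and> (\<forall>p\<in>Cn n. \<forall>q\<in>Cn n. circ n e p q \<in> Cn n)
    \<and> (\<forall>a. \<forall>p\<in>Cn n. \<forall>q\<in>Cn n. \<forall>r\<in>Cn n.
          circ n e (Polynomial.smult a p + q) r = Polynomial.smult a (circ n e p r) + circ n e q r)
    \<and> (\<forall>p\<in>Cn n. \<forall>q\<in>Cn n. circ n e p q = circ n e q p)
    \<and> (\<forall>x\<in>Cn n. \<forall>y\<in>Cn n. \<forall>z\<in>Cn n. \<forall>w\<in>Cn n.
          circ n e (circ n e x y) (circ n e z w) = circ n e (circ n e x z) (circ n e y w))
    \<and> (\<forall>c\<in>Cn n. \<forall>d\<in>Cn n. c \<noteq> 0 \<and> circ n e c c = c \<and> d \<noteq> 0 \<and> circ n e d d = d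
          \<longrightarrow> spectrum_Cn n e c = spectrum_Cn n e d)
    \<and> (\<forall>p\<in>Cn n. principal_power (circ n e) (n + 1) p = Polynomial.smult (beta n e p) p)
    \<and> (\<forall>p\<in>Cn n. \<forall>q\<in>Cn n. beta n e (circ n e p q) = beta n e p * beta n e q)"
proof -
  have "0 < n" using assms(1) by simp
  then interpret circ_algebra n e
    using assms(2) by unfold_locales
  have "Cn n = {p. degree p < n}" by (simp add: Cn_def)
  then show ?thesis
    using poly_vs.vector_space_axioms subspace_degree_less[OF n_pos] dim_degree_less[OF n_pos]
      circ_in_Cn circ_linear_left circ_commute circ_medial spectrum_idempotent
      principal_power_n_plus_one beta_circ
    by auto
qed

end
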